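(* Let $W:\mathbb{R}\to[0,\infty]$ and constants $a,C_1,C_2>0$ be such that for all $t>0$, $B_W(at)\subset C_1t\,B_1^1+C_2\sqrt{t}\,B_2^1$. Then for every $n\ge1$ and all $t>0$, $B_{W_n}(at)\subset C_1t\,B_1^n+C_2\sqrt{t}\,B_2^n$, where $W_n(x)=\sum_{i=1}^n W(x_i)$ for $x\in\mathbb{R}^n$.
   Context: For $V:\mathbb{R}^m\to[0,\infty]$, $B_V(t)=\{x\in\mathbb{R}^m: V(x)\le t\}$. $B_p^n=\{x\in\mathbb{R}^n:(\sum_i|x_i|^p)^{1/p}\le1\}$ is the unit ball of $\ell_p^n$; $+$ is Minkowski sum and $sB$ is the dilate of $B$ by $s$. *)

theory Defs
  imports "HOL-Analysis.Analysis" "HOL-Library.Set_Algebras"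
begin

definition sublevel :: "('a \<Rightarrow> ennreal) \<Rightarrow> ennreal \<Rightarrow> 'a set" where
  "sublevel V t = {x. V x \<le> t}"

definition l1_ball :: "(real ^ 'n) set" where
  "l1_ball = {x. (\<Sum>i\<in>UNIV. \<bar>x $ i\<bar>) \<le> 1}"

definition l2_ball :: "(real ^ 'n) set" where
  "l2_ball = {x. sqrt (\<Sum>i\<in>UNIV. (x $ i)^2) \<le> 1}"

end

theory Submission
  imports Defs
begin

text \<open>Given \<open>x\<close> with \<open>\<Sum>\<^sub>i W(x\<^sub>i) \<le> at\<close>, put \<open>s\<^sub>i = W(x\<^sub>i)/a\<close>, so that \<open>\<Sum>\<^sub>i s\<^sub>i \<le> t\<close> and
  the one-dimensional hypothesis at level \<open>s\<^sub>i\<close> gives \<open>|x\<^sub>i| \<le> C\<^sub>1 s\<^sub>i + C\<^sub>2 \<surd>s\<^sub>i\<close>. Splitting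
  \<open>x\<^sub>i = p\<^sub>i + q\<^sub>i\<close> accordingly, \<open>\<Sum>\<^sub>i |p\<^sub>i| \<le> C\<^sub>1 t\<close> and
  \<open>\<Sum>\<^sub>i q\<^sub>i\<^sup>2 \<le> C\<^sub>2\<^sup>2 \<Sum>\<^sub>i s\<^sub>i \<le> C\<^sub>2\<^sup>2 t\<close>.\<close>

lemma l2_ball_eq_cball: "l2_ball = cball (0 :: real ^ 'n) 1"
  by (auto simp: set_eq_iff l2_ball_def mem_cball_0 norm_vec_def L2_set_def)

lemma scaleR_image_l2_ball:
  assumes "r > 0"
  shows "(\<lambda>x. r *\<^sub>R x) ` l2_ball = cball (0 :: real ^ 'n) r"
  using assms by (simp add: l2_ball_eq_cball cball_scale)

lemma mem_scaleR_image_l1_ball_iff: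
  fixes x :: "real ^ 'n"
  assumes "r > 0"
  shows "x \<in> (\<lambda>x. r *\<^sub>R x) ` l1_ball \<longleftrightarrow> (\<Sum>i\<in>UNIV. \<bar>x $ i\<bar>) \<le> r"
proof
  assume "x \<in> (\<lambda>x. r *\<^sub>R x) ` l1_ball"
  then obtain y where "y \<in> l1_ball" "x = r *\<^sub>R y" by blast
  then show "(\<Sum>i\<in>UNIV. \<bar>x $ i\<bar>) \<le> r"
    using assms by (simp add: l1_ball_def abs_mult flip: sum_distrib_left)
next
  assume "(\<Sum>i\<in>UNIV. \<bar>x $ i\<bar>) \<le> r"
  moreover have "(\<Sum>i\<in>UNIV. \<bar>(inverse r *\<^sub>R x) $ i\<bar>) = (\<Sum>i\<in>UNIV. \<bar>x $ i\<bar>) / r"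
    using assms by (simp add: abs_mult divide_inverse_commute sum_distrib_left)
  ultimately have "inverse r *\<^sub>R x \<in> l1_ball"
    using assms by (simp add: l1_ball_def)
  moreover have "x = r *\<^sub>R (inverse r *\<^sub>R x)" using assms by simp
  ultimately show "x \<in> (\<lambda>x. r *\<^sub>R x) ` l1_ball" by blast
qed

lemma abs_le_of_mem_scaled_intervals:
  fixes y c d :: real
  assumes "y \<in> (\<lambda>x. c *\<^sub>R x) ` {x. \<bar>x\<bar> \<le> 1} + (\<lambda>x. d *\<^sub>R x) ` {x. \<bar>x\<bar> \<le> 1}"
  shows "\<bar>y\<bar> \<le> \<bar>c\<bar> + \<bar>d\<bar>"
proof -
  from assms obtain u v where "\<bar>u\<bar> \<le> 1" "\<bar>v\<bar> \<le> 1" and y: "y = c * u + d * v"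
    by (auto elim!: set_plus_elim)
  then have "\<bar>c * u\<bar> \<le> \<bar>c\<bar>" "\<bar>d * v\<bar> \<le> \<bar>d\<bar>"
    by (auto simp: abs_mult intro: mult_left_le)
  with y show ?thesis by linarith
qed

lemma abs_le_add_imp_split:
  fixes y c d :: real
  assumes "c \<ge> 0" "d \<ge> 0" "\<bar>y\<bar> \<le> c + d"
  shows "\<exists>p q. y = p + q \<and> \<bar>p\<bar> \<le> c \<and> \<bar>q\<bar> \<le> d"
proof (cases "\<bar>y\<bar> \<le> c")
  case True
  with assms have "y = y + 0 \<and> \<bar>y\<bar> \<le> c \<and> \<bar>0::real\<bar> \<le> d" by simp
  then show ?thesis by blast
next
  case False
  with assms have "y = sgn y * c + (y - sgn y * c) \<and> \<bar>sgn y * c\<bar> \<le> c \<and> \<bar>y - sgn y * c\<bar> \<le> d"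
    by (auto simp: sgn_if)
  then show ?thesis by blast
qed

text \<open>The bound at level \<open>s\<close> follows from the bounds at all levels \<open>s' > s\<close>, since the
  right-hand side is continuous from the right; this covers \<open>s = 0\<close>, where the hypothesis says
  nothing directly.\<close>
lemma abs_le_of_sublevel:
  fixes W :: "real \<Rightarrow> ennreal" and a C1 C2 s y :: real
  assumes "a > 0" "s \<ge> 0"
    and sub: "\<forall>t>0. sublevel W (ennreal (a * t)) \<subseteq>
           ((\<lambda>x. (C1 * t) *\<^sub>R x) ` {x::real. \<bar>x\<bar> \<le> 1}) +
           ((\<lambda>x. (C2 * sqrt t) *\<^sub>R x) ` {x::real. \<bar>x\<bar> \<le> 1})"
    and "W y \<le> ennreal (a * s)"
  shows "\<bar>y\<bar> \<le> \<bar>C1\<bar> * s + \<bar>C2\<bar> * sqrt s"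
proof -
  have bound_above: "\<bar>y\<bar> \<le> \<bar>C1\<bar> * t + \<bar>C2\<bar> * sqrt t" if "t > s" for t
  proof -
    have "W y \<le> ennreal (a * t)"
      using assms(1,4) that by (metis order_trans ennreal_leI less_imp_le mult_left_mono)
    then have "y \<in> sublevel W (ennreal (a * t))" by (simp add: sublevel_def)
    moreover have "t > 0" using that \<open>s \<ge> 0\<close> by linarith
    ultimately have "y \<in> ((\<lambda>x. (C1 * t) *\<^sub>R x) ` {x. \<bar>x\<bar> \<le> 1}) +
           ((\<lambda>x. (C2 * sqrt t) *\<^sub>R x) ` {x. \<bar>x\<bar> \<le> 1})"
      using sub by blast
    then have "\<bar>y\<bar> \<le> \<bar>C1 * t\<bar> + \<bar>C2 * sqrt t\<bar>" by (rule abs_le_of_mem_scaled_intervals)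
    with \<open>t > 0\<close> show ?thesis by (simp add: abs_mult)
  qed
  have "\<forall>\<^sub>F t in at_right s. \<bar>y\<bar> \<le> \<bar>C1\<bar> * t + \<bar>C2\<bar> * sqrt t"
    using eventually_at_right_less by (rule eventually_mono) (rule bound_above)
  moreover have "((\<lambda>t. \<bar>C1\<bar> * t + \<bar>C2\<bar> * sqrt t) \<longlongrightarrow> \<bar>C1\<bar> * s + \<bar>C2\<bar> * sqrt s) (at s)"
    by (intro tendsto_intros)
  then have "((\<lambda>t. \<bar>C1\<bar> * t + \<bar>C2\<bar> * sqrt t) \<longlongrightarrow> \<bar>C1\<bar> * s + \<bar>C2\<bar> * sqrt s) (at_right s)"
    by (rule tendsto_within_subset) simp
  ultimately show ?thesis
    using tendsto_le[OF trivial_limit_at_right_real _ tendsto_const] by blast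
qed

lemma member_less_top_of_sum_le_ennreal:
  fixes f :: "'a \<Rightarrow> ennreal"
  assumes "finite I" "i \<in> I" "(\<Sum>i\<in>I. f i) \<le> ennreal r"
  shows "f i < top"
  using member_le_sum[OF assms(2) _ assms(1), of f] assms(3) by (simp add: le_less_trans)

lemma sum_enn2real_le:
  fixes f :: "'a \<Rightarrow> ennreal"
  assumes "finite I" "r \<ge> 0" "(\<Sum>i\<in>I. f i) \<le> ennreal r"
  shows "(\<Sum>i\<in>I. enn2real (f i)) \<le> r"
proof -
  have "(\<Sum>i\<in>I. enn2real (f i)) = enn2real (\<Sum>i\<in>I. f i)"
    using member_less_top_of_sum_le_ennreal[OF assms(1) _ assms(3)] by (simp add: enn2real_sum)
  also have "\<dots> \<le> r"
    using assms(2,3) by (metis enn2real_ennreal enn2real_mono ennreal_less_top)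
  finally show ?thesis .
qed

lemma mem_scaled_l1_ball_plus_l2_ball:
  fixes x :: "real ^ 'n" and s :: "'n \<Rightarrow> real" and C1 C2 t :: real
  assumes "C1 > 0" "C2 > 0" "t > 0" "\<And>i. s i \<ge> 0" "(\<Sum>i\<in>UNIV. s i) \<le> t"
    and "\<And>i. \<bar>x $ i\<bar> \<le> C1 * s i + C2 * sqrt (s i)"
  shows "x \<in> ((\<lambda>x. (C1 * t) *\<^sub>R x) ` l1_ball) + ((\<lambda>x. (C2 * sqrt t) *\<^sub>R x) ` l2_ball)"
proof -
  have "\<exists>p q. x $ i = p + q \<and> \<bar>p\<bar> \<le> C1 * s i \<and> \<bar>q\<bar> \<le> C2 * sqrt (s i)" for i
    using assms by (intro abs_le_add_imp_split) auto
  then obtain p q where split: "\<And>i. x $ i = p i + q i"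
    and p: "\<And>i. \<bar>p i\<bar> \<le> C1 * s i" and q: "\<And>i. \<bar>q i\<bar> \<le> C2 * sqrt (s i)"
    by metis
  have "(\<chi> i. p i) \<in> (\<lambda>x. (C1 * t) *\<^sub>R x) ` l1_ball"
  proof -
    have "(\<Sum>i\<in>UNIV. \<bar>p i\<bar>) \<le> (\<Sum>i\<in>UNIV. C1 * s i)"
      using p by (rule sum_mono)
    also have "\<dots> \<le> C1 * t"
      using assms(1,5) by (simp flip: sum_distrib_left)
    finally show ?thesis
      using assms(1,3) by (simp add: mem_scaleR_image_l1_ball_iff)
  qed
  moreover have "(\<chi> i. q i) \<in> (\<lambda>x. (C2 * sqrt t) *\<^sub>R x) ` l2_ball"
  proof -
    have "(\<Sum>i\<in>UNIV. (q i)\<^sup>2) \<le> (\<Sum>i\<in>UNIV. C2\<^sup>2 * s i)"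
    proof (rule sum_mono)
      fix i
      have "(q i)\<^sup>2 \<le> (C2 * sqrt (s i))\<^sup>2"
        using q[of i] by (metis abs_le_square_iff abs_of_nonneg order_trans abs_ge_zero)
      then show "(q i)\<^sup>2 \<le> C2\<^sup>2 * s i"
        using assms(4) by (simp add: power_mult_distrib)
    qed
    also have "\<dots> \<le> (C2 * sqrt t)\<^sup>2"
      using assms(3,5) by (simp add: power_mult_distrib mult_left_mono flip: sum_distrib_left)
    finally have "norm (\<chi> i. q i) \<le> C2 * sqrt t"
      using assms(2,3) by (simp add: norm_vec_def L2_set_def real_le_lsqrt)
    then show ?thesis
      using assms(2,3) by (simp add: scaleR_image_l2_ball)
  qed
  moreover have "x = (\<chi> i. p i) + (\<chi> i. q i)"
    by (simp add: vec_eq_iff split)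
  ultimately show ?thesis
    by (auto intro: set_plus_intro)
qed

theorem lemma7:
  fixes W :: "real \<Rightarrow> ennreal" and a C1 C2 :: real
  assumes "a > 0" and "C1 > 0" and "C2 > 0"
    and "\<forall>t>0. sublevel W (ennreal (a * t)) \<subseteq>
           ((\<lambda>x. (C1 * t) *\<^sub>R x) ` {x::real. \<bar>x\<bar> \<le> 1}) +
           ((\<lambda>x. (C2 * sqrt t) *\<^sub>R x) ` {x::real. \<bar>x\<bar> \<le> 1})"
  shows "\<forall>t>0. sublevel (\<lambda>x::real ^ 'n. \<Sum>i\<in>UNIV. W (x $ i)) (ennreal (a * t)) \<subseteq>
           ((\<lambda>x. (C1 * t) *\<^sub>R x) ` l1_ball) +
           ((\<lambda>x. (C2 * sqrt t) *\<^sub>R x) ` l2_ball)"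
proof (intro allI impI subsetI)
  fix t :: real and x :: "real ^ 'n"
  assume "t > 0" and "x \<in> sublevel (\<lambda>x::real ^ 'n. \<Sum>i\<in>UNIV. W (x $ i)) (ennreal (a * t))"
  then have sum_le: "(\<Sum>i\<in>UNIV. W (x $ i)) \<le> ennreal (a * t)"
    by (simp add: sublevel_def)
  have finite: "W (x $ i) < top" for i
    using member_less_top_of_sum_le_ennreal[OF _ _ sum_le] by simp
  define s where "s i = enn2real (W (x $ i)) / a" for i
  have s_nonneg: "s i \<ge> 0" for i
    using \<open>a > 0\<close> by (simp add: s_def)
  have "W (x $ i) \<le> ennreal (a * s i)" for i
    using \<open>a > 0\<close> finite by (simp add: s_def ennreal_enn2real_if less_top)
  then have "\<bar>x $ i\<bar> \<le> \<bar>C1\<bar> * s i + \<bar>C2\<bar> * sqrt (s i)" for i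
    by (rule abs_le_of_sublevel[OF \<open>a > 0\<close> s_nonneg assms(4)])
  then have "\<bar>x $ i\<bar> \<le> C1 * s i + C2 * sqrt (s i)" for i
    using assms(2,3) by simp
  moreover have "(\<Sum>i\<in>UNIV. s i) \<le> t"
    using sum_enn2real_le[OF _ _ sum_le] assms(1) \<open>t > 0\<close>
    by (simp add: s_def pos_divide_le_eq mult.commute flip: sum_divide_distrib)
  ultimately show "x \<in> ((\<lambda>x. (C1 * t) *\<^sub>R x) ` l1_ball) + ((\<lambda>x. (C2 * sqrt t) *\<^sub>R x) ` l2_ball)"
    using assms(2,3) \<open>t > 0\<close> s_nonneg by (intro mem_scaled_l1_ball_plus_l2_ball)
qed

end
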